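(* There is an evolution system $v^1_t=R^1$, $v^2_t=R^2$ (with $R^i$ depending on $v^1,v^2$ and finitely many of their $x$-derivatives) such that whenever $(v^1,v^2)$ satisfies it, the functions $$u^1=v^1_2+(v^1_1)^2+\bigl(v^2_1+v^1_1v^2-\mathrm{e}^{-3v^1}\bigr)^2,\qquad u^2=v^2_1+v^1_1v^2-\mathrm{e}^{-3v^1}$$ satisfy the Kersten–Krasilshchik system $$u^1_t=-u^1_3+6u^1u^1_1-3u^2u^2_3-3u^2_1u^2_2+3u^1_1(u^2)^2+6u^1u^2u^2_1,\qquad u^2_t=-u^2_3+3(u^2)^2u^2_1+3u^1u^2_1+3u^1_1u^2.$$
   Context: $u^i_j=\partial^ju^i/\partial x^j$, $v^i_j=\partial^jv^i/\partial x^j$. Complex-analytic, local considerations. *)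

theory Defs
  imports "HOL-Analysis.Analysis"
begin

text \<open>Functions of two complex variables (x,t), complex-analytic on an open set S:
  jointly continuous and holomorphic in each variable separately (Osgood).\<close>
definition analytic2 :: "(complex \<times> complex) set \<Rightarrow> (complex \<Rightarrow> complex \<Rightarrow> complex) \<Rightarrow> bool" where
  "analytic2 S f \<longleftrightarrow> open S \<and> continuous_on S (\<lambda>p. f (fst p) (snd p)) \<and>
     (\<forall>t. (\<lambda>x. f x t) holomorphic_on {x. (x, t) \<in> S}) \<and>
     (\<forall>x. (\<lambda>t. f x t) holomorphic_on {t. (x, t) \<in> S})"

definition Dx :: "nat \<Rightarrow> (complex \<Rightarrow> complex \<Rightarrow> complex) \<Rightarrow> complex \<Rightarrow> complex \<Rightarrow> complex" where
  "Dx k f x t = (deriv ^^ k) (\<lambda>y. f y t) x"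

definition Dt :: "(complex \<Rightarrow> complex \<Rightarrow> complex) \<Rightarrow> complex \<Rightarrow> complex \<Rightarrow> complex" where
  "Dt f x t = deriv (\<lambda>s. f x s) t"

definition jet :: "(complex \<Rightarrow> complex \<Rightarrow> complex) \<Rightarrow> complex \<Rightarrow> complex \<Rightarrow> nat \<Rightarrow> complex" where
  "jet f x t = (\<lambda>k. Dx k f x t)"

definition jet_function :: "nat \<Rightarrow> ((nat \<Rightarrow> complex) \<Rightarrow> (nat \<Rightarrow> complex) \<Rightarrow> complex) \<Rightarrow> bool" where
  "jet_function N R \<longleftrightarrow>
     (\<forall>a b a' b'. (\<forall>k\<le>N. a k = a' k \<and> b k = b' k) \<longrightarrow> R a b = R a' b') \<and>
     continuous_on UNIV (\<lambda>p. R (fst p) (snd p)) \<and>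
     (\<forall>k a b. (\<lambda>z. R (a(k := z)) b) holomorphic_on UNIV) \<and>
     (\<forall>k a b. (\<lambda>z. R a (b(k := z))) holomorphic_on UNIV)"

end

theory Submission
  imports Defs "HOL-Complex_Analysis.Cauchy_Integral_Formula"
begin

(* The right-hand sides R^1, R^2 are differential polynomials in v^1, v^2 and E = e^{-3 v^1}.
   Since D_x E = -3 v^1_1 E, such expressions are closed under the total x-derivative D_x.
   Along a solution, the t-derivative of any such expression P is the linearisation of P applied
   to the jets (D_x^j R^1, D_x^j R^2). This rests on the fact that the t-derivative commutes with
   x-derivatives of an analytic function of (x, t): the t-difference quotients converge uniformly
   in x on a small disc (by the Cauchy estimates), hence so do their x-derivatives. Applied to u^1
   and u^2, the Kersten-Krasilshchik equations become two identities between polynomials in the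
   jet variables and E, which are checked by normalisation. *)

section \<open>Differential polynomials\<close>

(* V1 j and V2 j are the jet coordinates v^1_j and v^2_j; Exp is e^{-3 v^1}. *)
datatype dpoly = V1 nat | V2 nat | Exp | Const int | Add dpoly dpoly | Mult dpoly dpoly

(* Syntax only: no ring laws hold for dpoly, the operations just build terms. *)
instantiation dpoly :: "{zero, one, plus, minus, uminus, times, power}"
begin

definition "0 = Const 0"
definition "1 = Const 1"
definition "p + q = Add p q"
definition "- p = Mult (Const (-1)) p"
definition "p - q = p + - (q :: dpoly)"
definition "p * q = Mult p q"

instance ..

end

lemmas dpoly_ops = zero_dpoly_def one_dpoly_def plus_dpoly_def uminus_dpoly_def minus_dpoly_def
  times_dpoly_def

primrec eval_dpoly :: "(nat \<Rightarrow> complex) \<Rightarrow> (nat \<Rightarrow> complex) \<Rightarrow> dpoly \<Rightarrow> complex" where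
  "eval_dpoly a b (V1 j) = a j"
| "eval_dpoly a b (V2 j) = b j"
| "eval_dpoly a b Exp = exp (- 3 * a 0)"
| "eval_dpoly a b (Const c) = of_int c"
| "eval_dpoly a b (Add p q) = eval_dpoly a b p + eval_dpoly a b q"
| "eval_dpoly a b (Mult p q) = eval_dpoly a b p * eval_dpoly a b q"

primrec lin_dpoly ::
  "(nat \<Rightarrow> complex) \<Rightarrow> (nat \<Rightarrow> complex) \<Rightarrow> (nat \<Rightarrow> complex) \<Rightarrow> (nat \<Rightarrow> complex) \<Rightarrow> dpoly \<Rightarrow> complex"
where
  "lin_dpoly a b da db (V1 j) = da j"
| "lin_dpoly a b da db (V2 j) = db j"
| "lin_dpoly a b da db Exp = - 3 * da 0 * exp (- 3 * a 0)"
| "lin_dpoly a b da db (Const c) = 0"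
| "lin_dpoly a b da db (Add p q) = lin_dpoly a b da db p + lin_dpoly a b da db q"
| "lin_dpoly a b da db (Mult p q) =
     lin_dpoly a b da db p * eval_dpoly a b q + eval_dpoly a b p * lin_dpoly a b da db q"

primrec total_deriv :: "dpoly \<Rightarrow> dpoly" where
  "total_deriv (V1 j) = V1 (Suc j)"
| "total_deriv (V2 j) = V2 (Suc j)"
| "total_deriv Exp = Mult (Const (-3)) (Mult (V1 1) Exp)"
| "total_deriv (Const c) = Const 0"
| "total_deriv (Add p q) = Add (total_deriv p) (total_deriv q)"
| "total_deriv (Mult p q) = Add (Mult (total_deriv p) q) (Mult p (total_deriv q))"

primrec dpoly_order :: "dpoly \<Rightarrow> nat" where
  "dpoly_order (V1 j) = j"
| "dpoly_order (V2 j) = j"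
| "dpoly_order Exp = 0"
| "dpoly_order (Const c) = 0"
| "dpoly_order (Add p q) = max (dpoly_order p) (dpoly_order q)"
| "dpoly_order (Mult p q) = max (dpoly_order p) (dpoly_order q)"

lemma eval_total_deriv:
  "eval_dpoly a b (total_deriv e) = lin_dpoly a b (\<lambda>j. a (Suc j)) (\<lambda>j. b (Suc j)) e"
  by (induction e) simp_all

lemma has_field_derivative_eval_dpoly:
  assumes "\<And>j. ((\<lambda>s. a s j) has_field_derivative da j) (at s0)"
    and "\<And>j. ((\<lambda>s. b s j) has_field_derivative db j) (at s0)"
  shows "((\<lambda>s. eval_dpoly (a s) (b s) e) has_field_derivative lin_dpoly (a s0) (b s0) da db e) (at s0)"
  by (induction e) (auto intro!: derivative_eq_intros assms)

lemma eval_dpoly_cong: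
  assumes "dpoly_order e \<le> N" and "\<forall>k\<le>N. a k = a' k \<and> b k = b' k"
  shows "eval_dpoly a b e = eval_dpoly a' b' e"
  using assms by (induction e) auto

lemma continuous_on_eval_dpoly: "continuous_on UNIV (\<lambda>p. eval_dpoly (fst p) (snd p) e)"
proof -
  have coord: "continuous_on UNIV (\<lambda>p. fst p j)" "continuous_on UNIV (\<lambda>p. snd p j)" for j
    by (intro continuous_on_compose2[OF continuous_on_product_coordinates continuous_on_fst]
        continuous_on_compose2[OF continuous_on_product_coordinates continuous_on_snd]; simp)+
  show ?thesis
    by (induction e) (auto intro!: continuous_intros coord)
qed

lemma holomorphic_eval_dpoly_V1: "(\<lambda>z. eval_dpoly (a(k := z)) b e) holomorphic_on UNIV"
proof (induction e)
  case (V1 j)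
  show ?case by (cases "j = k") auto
next
  case Exp
  show ?case by (cases "k = 0") (auto intro!: holomorphic_intros)
qed (auto intro!: holomorphic_intros)

lemma holomorphic_eval_dpoly_V2: "(\<lambda>z. eval_dpoly a (b(k := z)) e) holomorphic_on UNIV"
proof (induction e)
  case (V2 j)
  show ?case by (cases "j = k") auto
qed (auto intro!: holomorphic_intros)

lemma jet_function_eval_dpoly:
  assumes "dpoly_order e \<le> N"
  shows "jet_function N (\<lambda>a b. eval_dpoly a b e)"
  unfolding jet_function_def
proof (intro conjI allI impI)
  show "eval_dpoly a b e = eval_dpoly a' b' e" if "\<forall>k\<le>N. a k = a' k \<and> b k = b' k" for a b a' b'
    using assms that by (rule eval_dpoly_cong)
qed (simp_all add: continuous_on_eval_dpoly holomorphic_eval_dpoly_V1 holomorphic_eval_dpoly_V2)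

lemma higher_deriv_eval_dpoly:
  assumes F: "F holomorphic_on U" and G: "G holomorphic_on U" and U: "open U" and y: "y \<in> U"
  shows "(deriv ^^ k) (\<lambda>y. eval_dpoly (\<lambda>j. (deriv ^^ j) F y) (\<lambda>j. (deriv ^^ j) G y) e) y
       = eval_dpoly (\<lambda>j. (deriv ^^ j) F y) (\<lambda>j. (deriv ^^ j) G y) ((total_deriv ^^ k) e)"
  using y
proof (induction k arbitrary: y)
  case (Suc k)
  let ?E = "\<lambda>e y. eval_dpoly (\<lambda>j. (deriv ^^ j) F y) (\<lambda>j. (deriv ^^ j) G y) e"
  have "(deriv ^^ Suc k) (?E e) y = deriv (?E ((total_deriv ^^ k) e)) y"
    using Suc by (auto intro!: deriv_cong_ev eventually_mono[OF eventually_nhds_in_open[OF U Suc.prems]])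
  also have "\<dots> = ?E (total_deriv ((total_deriv ^^ k) e)) y"
    unfolding eval_total_deriv
    by (intro DERIV_imp_deriv has_field_derivative_eval_dpoly
        has_field_derivative_higher_deriv[OF F U Suc.prems] has_field_derivative_higher_deriv[OF G U Suc.prems])
  finally show ?case by simp
qed simp

section \<open>Commuting t- and x-derivatives of analytic functions\<close>

lemma open_slice_x: "open S \<Longrightarrow> open {x. (x, t) \<in> S}"
  using open_vimage[of S "\<lambda>x. (x, t)"] by (simp add: vimage_def continuous_intros)

lemma open_slice_t: "open S \<Longrightarrow> open {t. (x, t) \<in> S}"
  using open_vimage[of S "\<lambda>t. (x, t)"] by (simp add: vimage_def continuous_intros)

lemma open_contains_cball_Times:
  fixes x :: "'a::metric_space" and t :: "'b::metric_space"
  assumes "open S" and "(x, t) \<in> S"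
  obtains r where "r > 0" and "cball x r \<times> cball t r \<subseteq> S"
proof -
  obtain A B where AB: "open A" "open B" "(x, t) \<in> A \<times> B" "A \<times> B \<subseteq> S"
    using open_prod_elim assms by blast
  obtain r1 r2 where r12: "r1 > 0" "cball x r1 \<subseteq> A" "r2 > 0" "cball t r2 \<subseteq> B"
    using AB open_contains_cball by (metis mem_Times_iff fst_conv snd_conv)
  have "cball x (min r1 r2) \<times> cball t (min r1 r2) \<subseteq> cball x r1 \<times> cball t r2"
    by auto
  also have "\<dots> \<subseteq> S"
    using r12 AB(4) by blast
  finally show ?thesis
    using r12 by (intro that[of "min r1 r2"]) auto
qed

lemma norm_second_deriv_le_half_disc:
  fixes \<phi> :: "complex \<Rightarrow> complex"
  assumes hol: "\<phi> holomorphic_on T" and sub: "cball t0 r \<subseteq> T"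
    and M: "\<And>s. s \<in> cball t0 r \<Longrightarrow> norm (\<phi> s) \<le> M"
    and r: "r > 0" and s: "s \<in> ball t0 (r / 2)"
  shows "norm ((deriv ^^ 2) \<phi> s) \<le> 8 * M / r^2"
proof -
  have cb: "cball s (r / 2) \<subseteq> cball t0 r"
  proof
    fix y
    assume "y \<in> cball s (r / 2)"
    then show "y \<in> cball t0 r"
      using s dist_triangle[of t0 y s] by simp
  qed
  have "norm ((deriv ^^ 2) \<phi> s) \<le> fact 2 * M / (r / 2)^2"
  proof (rule Cauchy_inequality)
    show "\<phi> holomorphic_on ball s (r / 2)"
      using hol cb sub by (meson ball_subset_cball holomorphic_on_subset order_trans)
    show "continuous_on (cball s (r / 2)) \<phi>"
      using holomorphic_on_imp_continuous_on[OF hol] cb sub by (meson continuous_on_subset order_trans)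
    show "norm (\<phi> x) \<le> M" if "norm (s - x) = r / 2" for x
      using M[of x] that cb by (auto simp: dist_norm)
  qed (use r in simp)
  also have "\<dots> = 8 * M / r^2"
    by (simp add: power2_eq_square field_simps)
  finally show ?thesis .
qed

lemma holomorphic_quadratic_remainder:
  fixes \<phi> :: "complex \<Rightarrow> complex"
  assumes hol: "\<phi> holomorphic_on T" and T: "open T" and r: "r > 0" and sub: "cball t0 r \<subseteq> T"
    and M: "\<And>s. s \<in> cball t0 r \<Longrightarrow> norm (\<phi> s) \<le> M"
    and h: "norm h < r / 2"
  shows "norm (\<phi> (t0 + h) - \<phi> t0 - deriv \<phi> t0 * h) \<le> 8 * M / r^2 * norm h ^ 2"
proof -
  let ?B = "ball t0 (r / 2)"
  have "?B \<subseteq> cball t0 r"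
    using r by (auto simp: subset_eq)
  then have B_sub: "?B \<subseteq> T"
    using sub by blast
  have derivs: "((deriv ^^ i) \<phi> has_field_derivative (deriv ^^ Suc i) \<phi> s) (at s within ?B)"
    if "s \<in> ?B" for i s
    using has_field_derivative_higher_deriv[OF hol T, of s i] B_sub that
    by (blast intro: has_field_derivative_at_within)
  have second_deriv: "norm ((deriv ^^ Suc 1) \<phi> s) \<le> 8 * M / r^2" if "s \<in> ?B" for s
    using norm_second_deriv_le_half_disc[OF hol sub M r that] by (simp add: numeral_2_eq_2)
  have "norm ((deriv ^^ 0) \<phi> (t0 + h) - (\<Sum>i\<le>1. (deriv ^^ i) \<phi> t0 * (t0 + h - t0) ^ i / fact i))
        \<le> 8 * M / r^2 * norm (t0 + h - t0) ^ Suc 1 / fact 1"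
  proof (rule complex_Taylor[where f="\<lambda>i. (deriv ^^ i) \<phi>", OF convex_ball derivs second_deriv])
    show "t0 \<in> ?B" "t0 + h \<in> ?B"
      using r h by (simp_all add: dist_norm)
  qed
  then show ?thesis
    by (simp add: numeral_2_eq_2 algebra_simps)
qed

lemma uniform_limit_at_0_linear_bound:
  fixes q :: "'a::real_normed_vector \<Rightarrow> 'b \<Rightarrow> 'c::metric_space"
  assumes d: "d > 0"
    and bound: "\<And>h x. h \<noteq> 0 \<Longrightarrow> norm h < d \<Longrightarrow> x \<in> A \<Longrightarrow> dist (q h x) (g x) \<le> B * norm h"
  shows "uniform_limit A q g (at 0)"
  unfolding uniform_limit_iff
proof (intro allI impI)
  fix \<epsilon> :: real
  assume \<epsilon>: "\<epsilon> > 0"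
  define \<delta> where "\<delta> = min d (\<epsilon> / (\<bar>B\<bar> + 1))"
  have \<delta>: "\<delta> > 0" "\<delta> \<le> d"
    using d \<epsilon> by (simp_all add: \<delta>_def)
  have "(\<bar>B\<bar> + 1) * \<delta> \<le> (\<bar>B\<bar> + 1) * (\<epsilon> / (\<bar>B\<bar> + 1))"
    by (intro mult_left_mono) (simp_all add: \<delta>_def)
  then have \<delta>_\<epsilon>: "(\<bar>B\<bar> + 1) * \<delta> \<le> \<epsilon>"
    by simp
  have "dist (q h x) (g x) < \<epsilon>" if "h \<noteq> 0" "norm h < \<delta>" "x \<in> A" for h x
  proof -
    have "dist (q h x) (g x) \<le> B * norm h"
      using bound that \<delta> by simp
    also have "\<dots> \<le> \<bar>B\<bar> * norm h"
      by (intro mult_right_mono) simp_all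
    also have "\<dots> \<le> \<bar>B\<bar> * \<delta>"
      using that by (intro mult_left_mono) simp_all
    also have "\<dots> < (\<bar>B\<bar> + 1) * \<delta>"
      using \<delta> by (simp add: distrib_right)
    finally show ?thesis
      using \<delta>_\<epsilon> by linarith
  qed
  then show "\<forall>\<^sub>F h in at 0. \<forall>x\<in>A. dist (q h x) (g x) < \<epsilon>"
    unfolding eventually_at using \<delta> by (auto simp: dist_norm)
qed

lemma analytic2_difference_quotient_uniform_limit:
  assumes f: "analytic2 S f" and r: "r > 0" and box: "cball x0 r \<times> cball t0 r \<subseteq> S"
  shows "uniform_limit (ball x0 r) (\<lambda>h x. inverse h * (f x (t0 + h) - f x t0)) (\<lambda>x. Dt f x t0) (at 0)"
proof -
  have "continuous_on (cball x0 r \<times> cball t0 r) (\<lambda>p. f (fst p) (snd p))"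
    using f box continuous_on_subset unfolding analytic2_def by blast
  then have "compact ((\<lambda>p. f (fst p) (snd p)) ` (cball x0 r \<times> cball t0 r))" (is "compact ?image")
    by (intro compact_continuous_image compact_Times compact_cball)
  then obtain M where "\<forall>z \<in> ?image. norm z \<le> M"
    using compact_imp_bounded[of ?image] unfolding bounded_iff by blast
  then have M: "\<And>p. p \<in> cball x0 r \<times> cball t0 r \<Longrightarrow> norm (f (fst p) (snd p)) \<le> M"
    by blast
  have remainder: "norm (f x (t0 + h) - f x t0 - Dt f x t0 * h) \<le> 8 * M / r^2 * norm h ^ 2"
    if x: "x \<in> cball x0 r" and h: "norm h < r / 2" for x h
    unfolding Dt_def
  proof (rule holomorphic_quadratic_remainder[where T="{t. (x, t) \<in> S}"])
    show "open {t. (x, t) \<in> S}" "(\<lambda>t. f x t) holomorphic_on {t. (x, t) \<in> S}"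
      using f by (auto simp: analytic2_def intro: open_slice_t)
    show "cball t0 r \<subseteq> {t. (x, t) \<in> S}"
      using box x by auto
    show "norm (f x s) \<le> M" if "s \<in> cball t0 r" for s
      using M[of "(x, s)"] x that by simp
  qed (use r h in simp_all)
  show ?thesis
  proof (rule uniform_limit_at_0_linear_bound)
    fix h :: complex and x
    assume h: "h \<noteq> 0" "norm h < r / 2" and x: "x \<in> ball x0 r"
    have "inverse h * (f x (t0 + h) - f x t0) - Dt f x t0 = (f x (t0 + h) - f x t0 - Dt f x t0 * h) / h"
      using h(1) by (simp add: field_simps)
    then have "dist (inverse h * (f x (t0 + h) - f x t0)) (Dt f x t0)
        = norm (f x (t0 + h) - f x t0 - Dt f x t0 * h) / norm h"
      by (simp add: dist_norm norm_divide)
    also have "\<dots> \<le> 8 * M / r^2 * norm h ^ 2 / norm h"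
      using remainder x h by (intro divide_right_mono) auto
    also have "\<dots> = 8 * M / r^2 * norm h"
      by (simp add: power2_eq_square)
    finally show "dist (inverse h * (f x (t0 + h) - f x t0)) (Dt f x t0) \<le> 8 * M / r^2 * norm h" .
  qed (use r in simp)
qed

lemma higher_deriv_cmult_diff:
  assumes "F holomorphic_on U" and "G holomorphic_on U" and "open U" and "x \<in> U"
  shows "(deriv ^^ k) (\<lambda>y. c * (F y - G y)) x = c * ((deriv ^^ k) F x - (deriv ^^ k) G x)"
  using assms by (simp add: higher_deriv_cmult[where A=U] higher_deriv_diff holomorphic_intros)

lemma has_field_derivative_Dx_Dt:
  assumes f: "analytic2 S f" and xt: "(x, t) \<in> S"
  shows "((\<lambda>s. Dx k f x s) has_field_derivative Dx k (Dt f) x t) (at t)"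
proof -
  obtain r where r: "r > 0" and box: "cball x r \<times> cball t r \<subseteq> S"
    using open_contains_cball_Times f xt unfolding analytic2_def by metis
  have slice: "(\<lambda>y. f y s) holomorphic_on ball x r" if "s \<in> cball t r" for s
  proof (rule holomorphic_on_subset)
    show "(\<lambda>y. f y s) holomorphic_on {y. (y, s) \<in> S}"
      using f by (simp add: analytic2_def)
    show "ball x r \<subseteq> {y. (y, s) \<in> S}"
      using box that ball_subset_cball by blast
  qed
  have near: "\<forall>\<^sub>F h in at 0. norm h < r"
    using eventually_at_ball[OF r, of 0 UNIV] by (rule eventually_mono) simp
  let ?q = "\<lambda>h y. inverse h * (f y (t + h) - f y t)"
  \<comment> \<open>Weierstrass: x-derivatives of a locally uniformly convergent family converge.\<close>
  have "((\<lambda>h. (deriv ^^ k) (?q h) x) \<longlongrightarrow> (deriv ^^ k) (\<lambda>y. Dt f y t) x) (at 0)"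
  proof (rule higher_deriv_complex_uniform_limit)
    show "uniform_limit (ball x r) ?q (\<lambda>y. Dt f y t) (at 0)"
      by (rule analytic2_difference_quotient_uniform_limit[OF f r box])
    have "?q h holomorphic_on ball x r" if "norm h < r" for h
      using that r by (intro holomorphic_intros slice) (auto simp: dist_norm)
    with near show "\<forall>\<^sub>F h in at 0. ?q h holomorphic_on ball x r"
      by (auto elim: eventually_mono)
  qed (use r in auto)
  moreover have "\<forall>\<^sub>F h in at 0. (deriv ^^ k) (?q h) x = (Dx k f x (t + h) - Dx k f x t) / h"
    using near
  proof (rule eventually_mono)
    fix h :: complex
    assume "norm h < r"
    then have "(\<lambda>y. f y (t + h)) holomorphic_on ball x r" "(\<lambda>y. f y t) holomorphic_on ball x r"
      using r by (auto intro!: slice simp: dist_norm)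
    then show "(deriv ^^ k) (?q h) x = (Dx k f x (t + h) - Dx k f x t) / h"
      unfolding Dx_def using r
      by (subst higher_deriv_cmult_diff[where U="ball x r"]) (auto simp: divide_inverse_commute)
  qed
  ultimately show ?thesis
    unfolding DERIV_def Dx_def[of k "Dt f"] by (rule Lim_transform_eventually)
qed

section \<open>Differential polynomials along a solution\<close>

lemma jet_conv_higher_deriv: "jet v x t = (\<lambda>j. (deriv ^^ j) (\<lambda>y. v y t) x)"
  by (simp add: jet_def Dx_def)

definition eval_along ::
  "(complex \<Rightarrow> complex \<Rightarrow> complex) \<Rightarrow> (complex \<Rightarrow> complex \<Rightarrow> complex) \<Rightarrow> dpoly \<Rightarrow> complex \<Rightarrow> complex \<Rightarrow> complex"
where
  "eval_along v1 v2 e x t = eval_dpoly (jet v1 x t) (jet v2 x t) e"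

lemma Dx_eval_along:
  assumes "analytic2 S v1" and "analytic2 S v2" and "(x, t) \<in> S"
  shows "Dx k (eval_along v1 v2 e) x t = eval_along v1 v2 ((total_deriv ^^ k) e) x t"
  unfolding Dx_def eval_along_def jet_conv_higher_deriv
  using assms by (intro higher_deriv_eval_dpoly) (auto simp: analytic2_def intro: open_slice_x)

lemma Dt_eval_along:
  assumes v1: "analytic2 S v1" and v2: "analytic2 S v2"
    and flow1: "\<And>x t. (x, t) \<in> S \<Longrightarrow> Dt v1 x t = eval_along v1 v2 P1 x t"
    and flow2: "\<And>x t. (x, t) \<in> S \<Longrightarrow> Dt v2 x t = eval_along v1 v2 P2 x t"
    and xt: "(x, t) \<in> S"
  shows "Dt (eval_along v1 v2 e) x t = lin_dpoly (jet v1 x t) (jet v2 x t)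
           (\<lambda>j. eval_along v1 v2 ((total_deriv ^^ j) P1) x t)
           (\<lambda>j. eval_along v1 v2 ((total_deriv ^^ j) P2) x t) e"
proof -
  have Dx_Dt: "Dx j (Dt v) x t = eval_along v1 v2 ((total_deriv ^^ j) P) x t"
    if flow: "\<And>x t. (x, t) \<in> S \<Longrightarrow> Dt v x t = eval_along v1 v2 P x t" for v P j
  proof -
    have "\<forall>\<^sub>F y in nhds x. (y, t) \<in> S"
      using eventually_nhds_in_open[OF open_slice_x[of S t], of x] v1 xt
      by (simp add: analytic2_def)
    then have "\<forall>\<^sub>F y in nhds x. Dt v y t = eval_along v1 v2 P y t"
      by (rule eventually_mono) (rule flow)
    then have "Dx j (Dt v) x t = Dx j (eval_along v1 v2 P) x t"
      unfolding Dx_def by (intro higher_deriv_cong_ev) auto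
    also have "\<dots> = eval_along v1 v2 ((total_deriv ^^ j) P) x t"
      by (rule Dx_eval_along[OF v1 v2 xt])
    finally show ?thesis .
  qed
  have "((\<lambda>s. eval_dpoly (jet v1 x s) (jet v2 x s) e) has_field_derivative
          lin_dpoly (jet v1 x t) (jet v2 x t)
           (\<lambda>j. eval_along v1 v2 ((total_deriv ^^ j) P1) x t)
           (\<lambda>j. eval_along v1 v2 ((total_deriv ^^ j) P2) x t) e) (at t)"
    unfolding jet_def
    using has_field_derivative_Dx_Dt[OF v1 xt] has_field_derivative_Dx_Dt[OF v2 xt]
    by (intro has_field_derivative_eval_dpoly) (simp_all add: Dx_Dt flow1 flow2)
  then show ?thesis
    unfolding Dt_def eval_along_def by (rule DERIV_imp_deriv)
qed

section \<open>The Kersten-Krasilshchik system\<close>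

definition rhs_v1 :: dpoly where
  "rhs_v1 = - V1 3 + Const 2 * V1 1 ^ 3 + Const 3 * V1 1 ^ 3 * V2 0 ^ 2 + Const 3 * V1 1 ^ 2 * V2 0 * V2 1
    - Const 3 * V1 1 * V1 2 * V2 0 ^ 2 - Const 3 * V1 1 * V2 0 * V2 2 - Const 3 * V1 2 * V2 0 * V2 1
    - Const 3 * V2 1 * V2 2
    + Exp * (Const 3 * V2 2 + Const 3 * V1 2 * V2 0 - Const 12 * V1 1 * V2 1 - Const 15 * V1 1 ^ 2 * V2 0)
    + Const 12 * Exp ^ 2 * V1 1"

definition rhs_v2 :: dpoly where
  "rhs_v2 = - V2 3 + Const 3 * V2 1 ^ 3 + Const 3 * V2 0 * V2 1 * V2 2 + Const 3 * V1 1 ^ 2 * V2 1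
    + Const 6 * V1 1 ^ 2 * V2 0 ^ 2 * V2 1 + Const 3 * V1 1 * V1 2 * V2 0 + Const 3 * V1 1 * V1 2 * V2 0 ^ 3
    + Const 9 * V1 1 * V2 0 * V2 1 ^ 2 + Const 3 * V1 1 * V2 0 ^ 2 * V2 2 + Const 3 * V1 2 * V2 0 ^ 2 * V2 1
    + Exp * (Const 12 * V1 1 ^ 2 + Const 9 * V1 1 ^ 2 * V2 0 ^ 2 - Const 3 * V1 2 - Const 3 * V1 2 * V2 0 ^ 2
             - Const 3 * V2 0 * V2 2 - Const 6 * V2 1 ^ 2)
    + Exp ^ 2 * (Const 3 * V2 1 - Const 9 * V1 1 * V2 0)"

definition miura_u2 :: dpoly where
  "miura_u2 = V2 1 + V1 1 * V2 0 - Exp"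

definition miura_u1 :: dpoly where
  "miura_u1 = V1 2 + V1 1 ^ 2 + miura_u2 ^ 2"

lemma miura_kk_identities:
  fixes a b :: "nat \<Rightarrow> complex"
  defines "D k e \<equiv> eval_dpoly a b ((total_deriv ^^ k) e)"
  defines "T e \<equiv> lin_dpoly a b (\<lambda>j. D j rhs_v1) (\<lambda>j. D j rhs_v2) e"
  shows "T miura_u1 = - D 3 miura_u1 + 6 * D 0 miura_u1 * D 1 miura_u1
            - 3 * D 0 miura_u2 * D 3 miura_u2 - 3 * D 1 miura_u2 * D 2 miura_u2
            + 3 * D 1 miura_u1 * (D 0 miura_u2)^2 + 6 * D 0 miura_u1 * D 0 miura_u2 * D 1 miura_u2"
    and "T miura_u2 = - D 3 miura_u2 + 3 * (D 0 miura_u2)^2 * D 1 miura_u2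
            + 3 * D 0 miura_u1 * D 1 miura_u2 + 3 * D 1 miura_u1 * D 0 miura_u2"
  unfolding D_def T_def rhs_v1_def rhs_v2_def miura_u1_def miura_u2_def
  by (simp add: dpoly_ops numeral_eq_Suc One_nat_def, algebra)+

lemma kk_system_along:
  assumes v1: "analytic2 S v1" and v2: "analytic2 S v2"
    and flow1: "\<And>x t. (x, t) \<in> S \<Longrightarrow> Dt v1 x t = eval_along v1 v2 rhs_v1 x t"
    and flow2: "\<And>x t. (x, t) \<in> S \<Longrightarrow> Dt v2 x t = eval_along v1 v2 rhs_v2 x t"
    and xt: "(x, t) \<in> S"
  defines "u1 \<equiv> eval_along v1 v2 miura_u1" and "u2 \<equiv> eval_along v1 v2 miura_u2"
  shows "Dt u1 x t = - Dx 3 u1 x t + 6 * u1 x t * Dx 1 u1 x t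
            - 3 * u2 x t * Dx 3 u2 x t - 3 * Dx 1 u2 x t * Dx 2 u2 x t
            + 3 * Dx 1 u1 x t * (u2 x t)^2 + 6 * u1 x t * u2 x t * Dx 1 u2 x t"
    and "Dt u2 x t = - Dx 3 u2 x t + 3 * (u2 x t)^2 * Dx 1 u2 x t
            + 3 * u1 x t * Dx 1 u2 x t + 3 * Dx 1 u1 x t * u2 x t"
  using miura_kk_identities[of "jet v1 x t" "jet v2 x t"]
  unfolding u1_def u2_def
  by (simp_all add: Dt_eval_along[OF v1 v2 flow1 flow2 xt] Dx_eval_along[OF v1 v2 xt] eval_along_def)

lemma eval_along_miura_u2:
  "eval_along v1 v2 miura_u2 x t = Dx 1 v2 x t + Dx 1 v1 x t * v2 x t - exp (- 3 * v1 x t)"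
  by (simp add: eval_along_def miura_u2_def dpoly_ops jet_def Dx_def)

lemma eval_along_miura_u1:
  "eval_along v1 v2 miura_u1 x t = Dx 2 v1 x t + (Dx 1 v1 x t)^2 + (eval_along v1 v2 miura_u2 x t)^2"
  by (simp add: eval_along_def miura_u1_def dpoly_ops jet_def numeral_eq_Suc One_nat_def power2_eq_square)

theorem mainTheorem10:
  shows "\<exists>N R1 R2. jet_function N R1 \<and> jet_function N R2 \<and>
    (\<forall>S v1 v2. analytic2 S v1 \<and> analytic2 S v2 \<and>
       (\<forall>x t. (x, t) \<in> S \<longrightarrow>
          Dt v1 x t = R1 (jet v1 x t) (jet v2 x t) \<and>
          Dt v2 x t = R2 (jet v1 x t) (jet v2 x t)) \<longrightarrow>
     (let u2 = (\<lambda>x t. Dx 1 v2 x t + Dx 1 v1 x t * v2 x t - exp (- 3 * v1 x t));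
          u1 = (\<lambda>x t. Dx 2 v1 x t + (Dx 1 v1 x t)^2 + (u2 x t)^2)
      in \<forall>x t. (x, t) \<in> S \<longrightarrow>
          Dt u1 x t = - Dx 3 u1 x t + 6 * u1 x t * Dx 1 u1 x t
              - 3 * u2 x t * Dx 3 u2 x t - 3 * Dx 1 u2 x t * Dx 2 u2 x t
              + 3 * Dx 1 u1 x t * (u2 x t)^2 + 6 * u1 x t * u2 x t * Dx 1 u2 x t \<and>
          Dt u2 x t = - Dx 3 u2 x t + 3 * (u2 x t)^2 * Dx 1 u2 x t
              + 3 * u1 x t * Dx 1 u2 x t + 3 * Dx 1 u1 x t * u2 x t))"
  unfolding Let_def eval_along_miura_u2[symmetric] eval_along_miura_u1[symmetric]
proof (rule exI[of _ 3], rule exI[of _ "\<lambda>a b. eval_dpoly a b rhs_v1"],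
    rule exI[of _ "\<lambda>a b. eval_dpoly a b rhs_v2"], intro conjI allI impI)
  show "jet_function 3 (\<lambda>a b. eval_dpoly a b rhs_v1)" "jet_function 3 (\<lambda>a b. eval_dpoly a b rhs_v2)"
    by (intro jet_function_eval_dpoly, simp add: rhs_v1_def rhs_v2_def dpoly_ops numeral_eq_Suc One_nat_def)+
qed (rule kk_system_along; auto simp: eval_along_def)+

end
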